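(* Let $p\geq 3$ be a prime, $u\in\{1,\ldots,p-1\}$ and $s$ a positive integer. Then for every integer $n>up^{s}$ we have $$\nu_{p}\big(A_{p,(p-1)(up^s-1)}(n)\big)\geq 1.$$
   Context: For an integer $m\geq 2$ and a positive integer $k$, the integers $A_{m,k}(n)$, $n\in\mathbb{N}=\{0,1,2,\ldots\}$, are defined by the formal power series identity $\prod_{i=0}^{\infty}\big(1-x^{m^{i}}\big)^{-k}=\sum_{n=0}^{\infty}A_{m,k}(n)x^{n}$. Equivalently, $A_{m,k}(n)$ is the number of representations of $n$ as a sum of powers of $m$ where each summand carries one of $k$ colors. For a prime $p$, $\nu_p(n)$ denotes the $p$-adic valuation of the integer $n$, with $\nu_p(0)=+\infty$. *)

theory Defs
  imports "HOL-Computational_Algebra.Computational_Algebra" "HOL-Number_Theory.Number_Theory"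
begin

text \<open>The series 1/(1 - x^d) = sum_{j>=0} x^(d j) for d >= 1, written out over the
  integers (int fps has no inverse operation). It satisfies
  geom_fps d * (1 - x^d) = 1.\<close>
definition geom_fps :: "nat \<Rightarrow> int fps" where
  "geom_fps d = Abs_fps (\<lambda>n. if d dvd n then 1 else 0)"

definition Aprod :: "nat \<Rightarrow> nat \<Rightarrow> nat \<Rightarrow> int fps" where
  "Aprod m k N = (\<Prod>i\<le>N. geom_fps (m ^ i) ^ k)"

text \<open>A_{m,k}(n): the n-th coefficient of prod_{i>=0} (1 - x^(m^i))^(-k).
  For m >= 2, m^i > n when i > n, so those factors are 1 modulo x^(n+1) and
  the coefficient of x^n of the infinite product equals that of the partial
  product over i <= n.\<close>
definition A :: "nat \<Rightarrow> nat \<Rightarrow> nat \<Rightarrow> int" where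
  "A m k n = fps_nth (Aprod m k n) n"


end

theory Submission
  imports Defs
begin

text \<open>Modulo \<open>p\<close>, the Frobenius congruence \<open>(a - b)^p \<equiv> a^p - b^p\<close> gives
  \<open>\<Prod>i\<le>N. (1 - x^(p^i)) \<equiv> (1 - x)^(1 + p + \<dots> + p^N)\<close>, so for this product \<open>P\<close>
  we get \<open>(1 - x) P^(p-1) \<equiv> (1 - x)^(p^(N+1)) \<equiv> 1 - x^(p^(N+1))\<close>.
  Hence \<open>R = P^-(p-1)\<close>, the generating series of \<open>A p (p - 1)\<close>, satisfies
  \<open>R \<equiv> 1 - x\<close> modulo \<open>p\<close> and \<open>x^(p^(N+1))\<close>, and so \<open>R^k \<equiv> (1 - x)^k\<close>, a polynomial
  of degree \<open>k\<close>. Thus \<open>p\<close> divides \<open>A p ((p - 1) k) n\<close> whenever \<open>k < n\<close>, for every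
  prime \<open>p\<close>. The theorem is the case \<open>k = u p^s - 1\<close>.\<close>

definition modeq :: "'a::comm_ring_1 \<Rightarrow> 'a \<Rightarrow> 'a \<Rightarrow> bool" where
  "modeq c a b \<longleftrightarrow> c dvd a - b"

lemma modeq_refl [simp]: "modeq c a a"
  by (simp add: modeq_def)

lemma modeq_sym: "modeq c a b \<Longrightarrow> modeq c b a"
  unfolding modeq_def by (metis dvd_minus_iff minus_diff_eq)

lemma modeq_trans [trans]:
  assumes "modeq c a b" and "modeq c b d"
  shows "modeq c a d"
proof -
  have "a - d = (a - b) + (b - d)"
    by simp
  then show ?thesis
    using assms unfolding modeq_def by (metis dvd_add)
qed

lemma modeq_mult:
  assumes "modeq c a b" and "modeq c a' b'"
  shows "modeq c (a * a') (b * b')"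
proof -
  have "a * a' - b * b' = (a - b) * a' + b * (a' - b')"
    by (simp add: algebra_simps)
  then show ?thesis
    using assms unfolding modeq_def by simp
qed

lemma modeq_power: "modeq c a b \<Longrightarrow> modeq c (a ^ n) (b ^ n)"
  by (induction n) (simp_all add: modeq_mult)

lemma modeq_of_nat_fps_nth:
  fixes f g :: "'a::comm_ring_1 fps"
  assumes "modeq (of_nat c) f g"
  shows "of_nat c dvd f $ n - g $ n"
proof -
  obtain h where "f - g = fps_const (of_nat c) * h"
    using assms unfolding modeq_def fps_of_nat by blast
  then have "f $ n - g $ n = of_nat c * h $ n"
    by (metis fps_mult_left_const_nth fps_sub_nth)
  then show ?thesis by simp
qed

lemma modeq_freshmans_dream:
  fixes a b :: "'a::comm_ring_1"
  assumes "prime p"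
  shows "modeq (of_nat p) ((a + b) ^ p) (a ^ p + b ^ p)"
proof -
  define t where "t k = of_nat (p choose k) * a ^ k * b ^ (p - k)" for k
  have "p > 0"
    using assms prime_gt_0_nat by blast
  then have "{..p} = insert p (insert 0 {1..<p})"
    by auto
  then have "(a + b) ^ p = t p + (t 0 + (\<Sum>k\<in>{1..<p}. t k))"
    using \<open>p > 0\<close> by (simp add: binomial_ring t_def)
  then have "(a + b) ^ p - (a ^ p + b ^ p) = (\<Sum>k\<in>{1..<p}. t k)"
    by (simp add: t_def)
  moreover have "of_nat p dvd t k" if "k \<in> {1..<p}" for k
  proof -
    have "p dvd p choose k"
      using dvd_choose_prime[of k p] assms that by simp
    then obtain c where "p choose k = p * c" ..
    then show ?thesis
      unfolding t_def by (simp add: mult.assoc)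
  qed
  ultimately show ?thesis
    unfolding modeq_def by (simp only: dvd_sum)
qed

lemma modeq_freshmans_dream_diff:
  fixes a b :: "'a::comm_ring_1"
  assumes "prime p"
  shows "modeq (of_nat p) ((a - b) ^ p) (a ^ p - b ^ p)"
proof -
  have "(a - b) ^ p - (a ^ p - b ^ p) = - (a ^ p - ((a - b) ^ p + b ^ p))"
    by (simp add: algebra_simps)
  then show ?thesis
    using modeq_freshmans_dream[OF assms, of "a - b" b] unfolding modeq_def
    by (simp only: diff_add_cancel dvd_minus_iff)
qed

lemma modeq_freshmans_dream_diff_prime_power:
  fixes a b :: "'a::comm_ring_1"
  assumes "prime p"
  shows "modeq (of_nat p) ((a - b) ^ p ^ k) (a ^ p ^ k - b ^ p ^ k)"
proof (induction k)
  case (Suc k)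
  have "(a - b) ^ p ^ Suc k = ((a - b) ^ p ^ k) ^ p"
    by (simp add: power_mult mult.commute flip: power_mult)
  also have "modeq (of_nat p) \<dots> ((a ^ p ^ k - b ^ p ^ k) ^ p)"
    using Suc.IH by (rule modeq_power)
  also have "modeq (of_nat p) \<dots> ((a ^ p ^ k) ^ p - (b ^ p ^ k) ^ p)"
    using assms by (rule modeq_freshmans_dream_diff)
  also have "\<dots> = a ^ p ^ Suc k - b ^ p ^ Suc k"
    by (simp add: mult.commute flip: power_mult)
  finally show ?case .
qed simp

lemma sum_gp_basic_nat: "(x - 1) * (\<Sum>i\<le>n. x ^ i) = x ^ Suc n - (1::nat)"
proof (cases "x = 0")
  case False
  then have "int ((x - 1) * (\<Sum>i\<le>n. x ^ i)) = int (x ^ Suc n - 1)"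
    using sum_gp_basic[of "int x" n] by (simp add: of_nat_diff algebra_simps)
  then show ?thesis by (simp only: of_nat_eq_iff)
qed simp

lemma modeq_prod_one_minus_power:
  fixes x :: "'a::comm_ring_1"
  assumes "prime p"
  shows "modeq (of_nat p) (\<Prod>i\<le>N. 1 - x ^ p ^ i) ((1 - x) ^ (\<Sum>i\<le>N. p ^ i))"
proof (induction N)
  case (Suc N)
  have "(\<Prod>i\<le>Suc N. 1 - x ^ p ^ i) = (\<Prod>i\<le>N. 1 - x ^ p ^ i) * (1 - x ^ p ^ Suc N)"
    by simp
  also have "modeq (of_nat p) \<dots> ((1 - x) ^ (\<Sum>i\<le>N. p ^ i) * (1 - x) ^ p ^ Suc N)"
    using modeq_mult[OF Suc.IH modeq_sym[OF modeq_freshmans_dream_diff_prime_power[OF assms, of 1 x "Suc N"]]]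
    by (simp only: power_one)
  also have "\<dots> = (1 - x) ^ (\<Sum>i\<le>Suc N. p ^ i)"
    by (simp add: power_add)
  finally show ?case .
qed simp

lemma modeq_one_minus_mult_prod_power:
  fixes x :: "'a::comm_ring_1"
  assumes "prime p"
  shows "modeq (of_nat p) ((1 - x) * (\<Prod>i\<le>N. 1 - x ^ p ^ i) ^ (p - 1)) (1 - x ^ p ^ Suc N)"
proof -
  have exponent: "Suc ((\<Sum>i\<le>N. p ^ i) * (p - 1)) = p ^ Suc N"
    using sum_gp_basic_nat[of p N] prime_gt_0_nat[OF assms] by (simp add: mult.commute)
  have "modeq (of_nat p) ((1 - x) * (\<Prod>i\<le>N. 1 - x ^ p ^ i) ^ (p - 1))
      ((1 - x) * ((1 - x) ^ (\<Sum>i\<le>N. p ^ i)) ^ (p - 1))"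
    by (rule modeq_mult[OF modeq_refl modeq_power[OF modeq_prod_one_minus_power[OF assms]]])
  also have "\<dots> = (1 - x) ^ Suc ((\<Sum>i\<le>N. p ^ i) * (p - 1))"
    by (simp only: power_Suc power_mult)
  also have "\<dots> = (1 - x) ^ p ^ Suc N"
    by (simp only: exponent)
  also have "modeq (of_nat p) \<dots> (1 - x ^ p ^ Suc N)"
    using modeq_freshmans_dream_diff_prime_power[OF assms, of 1 x "Suc N"] by (simp only: power_one)
  finally show ?thesis .
qed

lemma geom_fps_mult_one_minus_X_power:
  assumes "d > 0"
  shows "geom_fps d * (1 - fps_X ^ d) = 1"
proof (rule fps_ext)
  fix n
  have "(geom_fps d * (1 - fps_X ^ d)) $ n = geom_fps d $ n - (fps_X ^ d * geom_fps d) $ n"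
    by (simp add: algebra_simps)
  also have "\<dots> = (if n = 0 then 1 else 0)"
    using assms by (cases "n < d") (auto simp: geom_fps_def fps_X_power_mult_nth nat_dvd_not_less dvd_minus_self)
  finally show "(geom_fps d * (1 - fps_X ^ d)) $ n = 1 $ n"
    by simp
qed

lemma Aprod_mult_prod_one_minus_X_power:
  assumes "m > 0"
  shows "Aprod m k N * (\<Prod>i\<le>N. 1 - fps_X ^ m ^ i) ^ k = 1"
proof -
  have "(\<Prod>i\<le>N. geom_fps (m ^ i)) * (\<Prod>i\<le>N. 1 - fps_X ^ m ^ i) = 1"
    using assms by (simp add: geom_fps_mult_one_minus_X_power flip: prod.distrib)
  moreover have "Aprod m k N = (\<Prod>i\<le>N. geom_fps (m ^ i)) ^ k"
    by (simp add: Aprod_def prod_power_distrib)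
  ultimately show ?thesis
    by (simp flip: power_mult_distrib)
qed

lemma Aprod_mult: "Aprod m (k * l) N = Aprod m k N ^ l"
  by (simp add: Aprod_def power_mult prod_power_distrib)

lemma fps_nth_one_minus_X_power:
  "m < n \<Longrightarrow> ((1 - fps_X :: 'a::comm_ring_1 fps) ^ m) $ n = 0"
proof (induction m arbitrary: n)
  case (Suc m)
  have "((1 - fps_X :: 'a fps) ^ Suc m) $ n = ((1 - fps_X) ^ m) $ n - (fps_X * (1 - fps_X) ^ m) $ n"
    by (simp add: algebra_simps)
  then show ?case
    using Suc by simp
qed simp

lemma fps_nth_power_add_X_power_mult:
  fixes a h :: "'a::comm_ring_1 fps"
  assumes "n < M"
  shows "((a + fps_X ^ M * h) ^ k) $ n = (a ^ k) $ n"
proof -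
  obtain t where "(a + fps_X ^ M * h) ^ k - a ^ k = fps_X ^ M * t"
    using power_diff_sumr2[of "a + fps_X ^ M * h" k a] by (simp add: mult.assoc)
  then have "(a + fps_X ^ M * h) ^ k = a ^ k + fps_X ^ M * t"
    by (simp add: algebra_simps)
  then show ?thesis
    using assms by (simp add: fps_X_power_mult_nth)
qed

lemma modeq_Aprod_pred:
  fixes p N :: nat
  assumes "prime p"
  defines "R \<equiv> Aprod p (p - 1) N"
  shows "modeq (of_nat p) R (1 - fps_X + fps_X ^ p ^ Suc N * R)"
proof -
  define P :: "int fps" where "P = (\<Prod>i\<le>N. 1 - fps_X ^ p ^ i)"
  have "R * P ^ (p - 1) = 1"
    unfolding R_def P_def using assms(1) prime_gt_0_nat by (blast intro: Aprod_mult_prod_one_minus_X_power)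
  then have "(1 - fps_X) * P ^ (p - 1) * R = 1 - fps_X"
    by (metis mult.assoc mult.commute mult_1_right)
  moreover have "modeq (of_nat p) ((1 - fps_X) * P ^ (p - 1) * R) ((1 - fps_X ^ p ^ Suc N) * R)"
    unfolding P_def by (rule modeq_mult[OF modeq_one_minus_mult_prod_power[OF assms(1)] modeq_refl])
  ultimately have "modeq (of_nat p) (1 - fps_X) ((1 - fps_X ^ p ^ Suc N) * R)"
    by (simp only:)
  moreover have "R - (1 - fps_X + fps_X ^ p ^ Suc N * R) = - ((1 - fps_X) - (1 - fps_X ^ p ^ Suc N) * R)"
    by (simp add: algebra_simps)
  ultimately show ?thesis
    unfolding modeq_def by (simp only: dvd_minus_iff)
qed

lemma prime_dvd_A_pred_mult:
  assumes "prime p" and "k < n"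
  shows "int p dvd A p ((p - 1) * k) n"
proof -
  define R where "R = Aprod p (p - 1) n"
  define M where "M = p ^ Suc n"
  have "int p dvd (R ^ k) $ n - ((1 - fps_X + fps_X ^ M * R) ^ k) $ n"
    unfolding R_def M_def by (rule modeq_of_nat_fps_nth[OF modeq_power[OF modeq_Aprod_pred[OF assms(1)]]])
  moreover have "n < M"
    unfolding M_def using power_gt_expt[of p "Suc n"] prime_gt_1_nat[OF assms(1)] by simp
  then have "((1 - fps_X + fps_X ^ M * R) ^ k) $ n = ((1 - fps_X) ^ k) $ n"
    by (rule fps_nth_power_add_X_power_mult)
  moreover have "((1 - fps_X :: int fps) ^ k) $ n = 0"
    using assms(2) by (rule fps_nth_one_minus_X_power)
  moreover have "A p ((p - 1) * k) n = (R ^ k) $ n"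
    unfolding A_def R_def Aprod_mult ..
  ultimately show ?thesis
    by simp
qed

theorem theorem3p1:
  fixes p u s n :: nat
  assumes "prime p" and "p \<ge> 3"
    and "1 \<le> u" and "u \<le> p - 1"
    and "s \<ge> 1"
    and "n > u * p ^ s"
  shows "(int p) dvd A p ((p - 1) * (u * p ^ s - 1)) n"
proof -
  have "u * p ^ s - 1 < n"
    using assms(6) by simp
  then show ?thesis
    using assms(1) by (rule prime_dvd_A_pred_mult[rotated])
qed

end
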